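(* Let $r\ge2$ and $\Lambda=\Phi^+_{A_{r+1}}\setminus\{\alpha_{r+1}\}$, where $\alpha_{r+1}=\varepsilon_{r+1}-\varepsilon_{r+2}$. Then \[K_{B_r}(\tilde\alpha_{B_r})=K_\Lambda(2\tilde\alpha_{A_{r+1}}-\alpha_1-\alpha_{r+1}),\] where $\tilde\alpha_{B_r}=\varepsilon_1+\varepsilon_2\in\mathbb{R}^r$ and $2\tilde\alpha_{A_{r+1}}-\alpha_1-\alpha_{r+1}=\alpha_1+2\alpha_2+\cdots+2\alpha_r+\alpha_{r+1}=\varepsilon_1+\varepsilon_2-\varepsilon_{r+1}-\varepsilon_{r+2}\in\mathbb{R}^{r+2}$.
   Context: $\Phi^+_{A_{r+1}}=\{\varepsilon_i-\varepsilon_j:1\le i<j\le r+2\}\subset\mathbb{R}^{r+2}$, $\alpha_i=\varepsilon_i-\varepsilon_{i+1}$; for $\Lambda\subseteq\Phi^+_{A_{r+1}}$, $K_\Lambda(\mu)$ is the number of finite multisets of elements of $\Lambda$ summing to $\mu$. $\Phi^+_{B_r}=\{\varepsilon_i\pm\varepsilon_j:1\le i<j\le r\}\cup\{\varepsilon_i:1\le i\le r\}\subset\mathbb{R}^r$ and $K_{B_r}(\mu)$ is the number of finite multisets of elements of $\Phi^+_{B_r}$ summing to $\mu$. *)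

theory Defs
  imports Complex_Main "HOL-Library.Multiset"
begin

(* Vectors of R^n are modelled as functions nat => real, coordinate k for 1 <= k <= n,
   and all other coordinates 0. *)

definition eps :: "nat \<Rightarrow> nat \<Rightarrow> real" where
  "eps i = (\<lambda>k. if k = i then 1 else 0)"

definition vadd :: "(nat \<Rightarrow> real) \<Rightarrow> (nat \<Rightarrow> real) \<Rightarrow> nat \<Rightarrow> real" where
  "vadd u v = (\<lambda>k. u k + v k)"

definition vsub :: "(nat \<Rightarrow> real) \<Rightarrow> (nat \<Rightarrow> real) \<Rightarrow> nat \<Rightarrow> real" where
  "vsub u v = (\<lambda>k. u k - v k)"

definition vscale :: "real \<Rightarrow> (nat \<Rightarrow> real) \<Rightarrow> nat \<Rightarrow> real" where
  "vscale c u = (\<lambda>k. c * u k)"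

definition vsum :: "(nat \<Rightarrow> real) multiset \<Rightarrow> nat \<Rightarrow> real" where
  "vsum M = (\<lambda>k. \<Sum>v\<in>#M. v k)"

definition posA :: "nat \<Rightarrow> (nat \<Rightarrow> real) set" where
  "posA r = {vsub (eps i) (eps j) | i j. 1 \<le> i \<and> i < j \<and> j \<le> r + 2}"

definition alpha :: "nat \<Rightarrow> nat \<Rightarrow> real" where
  "alpha i = vsub (eps i) (eps (i + 1))"

definition highA :: "nat \<Rightarrow> nat \<Rightarrow> real" where
  "highA r = vsub (eps 1) (eps (r + 2))"

definition posB :: "nat \<Rightarrow> (nat \<Rightarrow> real) set" where
  "posB r = {vsub (eps i) (eps j) | i j. 1 \<le> i \<and> i < j \<and> j \<le> r}
          \<union> {vadd (eps i) (eps j) | i j. 1 \<le> i \<and> i < j \<and> j \<le> r}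
          \<union> {eps i | i. 1 \<le> i \<and> i \<le> r}"

definition highB :: "nat \<Rightarrow> real" where
  "highB = vadd (eps 1) (eps 2)"

definition K :: "(nat \<Rightarrow> real) set \<Rightarrow> (nat \<Rightarrow> real) \<Rightarrow> nat" where
  "K L mu = card {M. set_mset M \<subseteq> L \<and> vsum M = mu}"

definition KB :: "nat \<Rightarrow> (nat \<Rightarrow> real) \<Rightarrow> nat" where
  "KB r mu = K (posB r) mu"

end

theory Submission
  imports Defs
begin

text \<open>
Every positive root of \<open>B\<^sub>r\<close> and every root of \<open>\<Lambda>\<close> either
lies in \<open>\<Phi>\<^sup>+(A\<^sub>r\<^sub>-\<^sub>1) = {\<epsilon>\<^sub>i - \<epsilon>\<^sub>j : 1 \<le> i < j \<le> r}\<close> or has positive weight under a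
suitable linear form: the coordinate sum \<open>x\<^sub>1 + \<dots> + x\<^sub>r\<close> for \<open>B\<^sub>r\<close>, and \<open>-x\<^sub>r\<^sub>+\<^sub>1 - x\<^sub>r\<^sub>+\<^sub>2\<close>
for \<open>\<Lambda>\<close>. Both forms take the value 2 on the vector to be partitioned, so a partition
consists of a partition \<open>M\<^sub>0\<close> of \<open>\<epsilon>\<^sub>1 + \<epsilon>\<^sub>2 - \<epsilon>\<^sub>a - \<epsilon>\<^sub>b\<close> into roots of \<open>A\<^sub>r\<^sub>-\<^sub>1\<close>
(\<open>1 \<le> a, b \<le> r\<close>) together with either \<open>\<epsilon>\<^sub>a - \<epsilon>\<^sub>r\<^sub>+\<^sub>1, \<epsilon>\<^sub>b - \<epsilon>\<^sub>r\<^sub>+\<^sub>2\<close> (in \<open>\<Lambda>\<close>), or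
one long root \<open>\<epsilon>\<^sub>a + \<epsilon>\<^sub>b\<close> if \<open>a < b\<close> and two short roots \<open>\<epsilon>\<^sub>a, \<epsilon>\<^sub>b\<close> if \<open>a \<ge> b\<close> (in \<open>B\<^sub>r\<close>).
Gluing these roots onto \<open>M\<^sub>0\<close> is, on either side, a bijection from the triples \<open>(M\<^sub>0, a, b)\<close>.
\<close>

lemma sum_mset_eq_2_cases:
  fixes g :: "'a \<Rightarrow> real"
  assumes vals: "\<forall>v\<in>#M. g v \<in> {0, 1, 2}" and sum: "(\<Sum>v\<in>#M. g v) = 2"
  obtains (single) x M0 where "M = add_mset x M0" "g x = 2" "\<forall>v\<in>#M0. g v = 0"
    | (pair) x y M0 where "M = add_mset x (add_mset y M0)" "g x = 1" "g y = 1" "\<forall>v\<in>#M0. g v = 0"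
proof -
  define N where "N = {#v \<in># M. g v \<noteq> 0#}"
  define M0 where "M0 = {#v \<in># M. g v = 0#}"
  have M: "M = N + M0"
    using multiset_partition[of M "\<lambda>v. g v \<noteq> 0"] by (simp add: N_def M0_def)
  have zero: "\<forall>v\<in>#M0. g v = 0" by (simp add: M0_def)
  then have "(\<Sum>v\<in>#M0. g v) = 0" by (induction M0) auto
  then have sumN: "(\<Sum>v\<in>#N. g v) = 2" using sum by (simp add: M)
  have ge1: "\<And>v. v \<in># N \<Longrightarrow> 1 \<le> g v" using vals by (auto simp: N_def)
  have "real (size N) \<le> 2" using sum_mset_mono[of N "\<lambda>_. 1" g] ge1 sumN by simp
  moreover have "size N \<noteq> 0" using sumN by auto
  ultimately consider "size N = 1" | "size N = 2" by linarith
  then show thesis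
  proof cases
    case 1
    then obtain x where "N = {#x#}" using size_1_singleton_mset by blast
    then show thesis using single[of x M0] M zero sumN by simp
  next
    case 2
    then obtain x N' where N': "N = add_mset x N'"
      using size_eq_Suc_imp_eq_union[of N 1] by auto
    then have "size N' = 1" using 2 by simp
    then obtain y where "N = {#x, y#}" using N' size_1_singleton_mset by blast
    moreover have "1 \<le> g x" "1 \<le> g y" using ge1 \<open>N = {#x, y#}\<close> by auto
    ultimately show thesis using pair[of x y M0] M zero sumN by simp
  qed
qed

lemma union_eq_union_separated:
  assumes "A + M = B + N"
    and "\<forall>x\<in>#A. P x" "\<forall>x\<in>#B. P x" "\<forall>x\<in>#M. \<not> P x" "\<forall>x\<in>#N. \<not> P x"
  shows "A = B \<and> M = N"
proof -
  have "filter_mset P A = A" "filter_mset P M = {#}"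
    "filter_mset (\<lambda>x. \<not> P x) A = {#}" "filter_mset (\<lambda>x. \<not> P x) M = M"
    "filter_mset P B = B" "filter_mset P N = {#}"
    "filter_mset (\<lambda>x. \<not> P x) B = {#}" "filter_mset (\<lambda>x. \<not> P x) N = N"
    using assms(2-5) by (auto simp: filter_mset_eq_conv)
  then have "filter_mset P (A + M) = A" "filter_mset (\<lambda>x. \<not> P x) (A + M) = M"
    "filter_mset P (B + N) = B" "filter_mset (\<lambda>x. \<not> P x) (B + N) = N"
    by simp_all
  then show ?thesis using assms(1) by metis
qed

lemma eps_apply [simp]: "eps i k = (if k = i then 1 else 0)"
  by (simp add: eps_def)

lemma vadd_apply [simp]: "vadd u v k = u k + v k"
  by (simp add: vadd_def)

lemma vsub_apply [simp]: "vsub u v k = u k - v k"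
  by (simp add: vsub_def)

lemma vscale_apply [simp]: "vscale c u k = c * u k"
  by (simp add: vscale_def)

lemma vsum_empty [simp]: "vsum {#} = (\<lambda>_. 0)"
  by (simp add: vsum_def)

lemma vsum_add_mset [simp]: "vsum (add_mset x M) = vadd x (vsum M)"
  by (simp add: vsum_def vadd_def)

lemma vsum_union [simp]: "vsum (A + B) = vadd (vsum A) (vsum B)"
  by (simp add: vsum_def vadd_def)

lemma vadd_eps_eq_iff:
  "vadd (eps a) (eps b) = vadd (eps c) (eps d) \<longleftrightarrow> (a = c \<and> b = d) \<or> (a = d \<and> b = c)"
  by (auto simp: fun_eq_iff)

lemma additive_vsum:
  assumes "\<And>u v. h (vadd u v) = h u + h v" and "h (\<lambda>_. 0) = 0"
  shows "h (vsum M) = (\<Sum>v\<in>#M. h v)"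
  using assms by (induction M) auto

definition partitions :: "(nat \<Rightarrow> real) set \<Rightarrow> (nat \<Rightarrow> real) \<Rightarrow> (nat \<Rightarrow> real) multiset set" where
  "partitions L mu = {M. set_mset M \<subseteq> L \<and> vsum M = mu}"

lemma K_eq_card_partitions: "K L mu = card (partitions L mu)"
  by (simp add: K_def partitions_def)

definition common_roots :: "nat \<Rightarrow> (nat \<Rightarrow> real) set" where
  "common_roots r = {vsub (eps i) (eps j) | i j. 1 \<le> i \<and> i < j \<and> j \<le> r}"

lemma common_roots_apply_beyond: "v \<in> common_roots r \<Longrightarrow> r < k \<Longrightarrow> v k = 0"
  by (auto simp: common_roots_def)

lemma vsum_common_roots_apply_beyond:
  "set_mset M \<subseteq> common_roots r \<Longrightarrow> r < k \<Longrightarrow> vsum M k = 0"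
  by (induction M) (auto simp: common_roots_apply_beyond)

definition residual_partitions :: "nat \<Rightarrow> ((nat \<Rightarrow> real) multiset \<times> nat \<times> nat) set" where
  "residual_partitions r = {(M0, a, b). a \<in> {1..r} \<and> b \<in> {1..r} \<and>
      M0 \<in> partitions (common_roots r) (vsub (vsub highB (eps a)) (eps b))}"

abbreviation Lambda :: "nat \<Rightarrow> (nat \<Rightarrow> real) set" where
  "Lambda r \<equiv> posA r - {alpha (r + 1)}"

lemma common_roots_subset_Lambda: "common_roots r \<subseteq> Lambda r"
proof
  fix v assume v: "v \<in> common_roots r"
  then have "v \<in> posA r" by (force simp: common_roots_def posA_def)
  moreover have "v (r + 1) \<noteq> alpha (r + 1) (r + 1)"
    using common_roots_apply_beyond[OF v] by (simp add: alpha_def)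
  ultimately show "v \<in> Lambda r" by auto
qed

lemma LambdaE:
  assumes "v \<in> Lambda r"
  obtains (common) "v \<in> common_roots r"
    | (to_penultimate) a where "a \<in> {1..r}" "v = vsub (eps a) (eps (r + 1))"
    | (to_last) a where "a \<in> {1..r}" "v = vsub (eps a) (eps (r + 2))"
proof -
  obtain i j where ij: "1 \<le> i" "i < j" "j \<le> r + 2" "v = vsub (eps i) (eps j)"
    using assms by (auto simp: posA_def)
  have "i \<noteq> r + 1 \<or> j \<noteq> r + 2" using assms ij by (auto simp: alpha_def)
  then consider "j \<le> r" | "j = r + 1" "i \<le> r" | "j = r + 2" "i \<le> r" using ij by linarith
  then show thesis
    using ij common to_penultimate to_last by cases (auto simp: common_roots_def)
qed

lemma vsub_eps_mem_Lambda:
  assumes "a \<in> {1..r}" "j \<in> {r + 1, r + 2}"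
  shows "vsub (eps a) (eps j) \<in> Lambda r"
proof -
  have "vsub (eps a) (eps j) \<in> posA r" using assms by (force simp: posA_def)
  moreover have "vsub (eps a) (eps j) a \<noteq> alpha (r + 1) a" using assms by (auto simp: alpha_def)
  ultimately show ?thesis by (metis DiffI singletonD)
qed

definition glue_A :: "nat \<Rightarrow> (nat \<Rightarrow> real) multiset \<times> nat \<times> nat \<Rightarrow> (nat \<Rightarrow> real) multiset" where
  "glue_A r = (\<lambda>(M0, a, b).
     add_mset (vsub (eps a) (eps (r + 1))) (add_mset (vsub (eps b) (eps (r + 2))) M0))"

lemma glue_A_mem_partitions:
  assumes "x \<in> residual_partitions r"
  shows "glue_A r x \<in> partitions (Lambda r) (vsub (vsub highB (eps (r + 1))) (eps (r + 2)))"
proof -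
  obtain M0 a b where x: "x = (M0, a, b)" "a \<in> {1..r}" "b \<in> {1..r}"
      "set_mset M0 \<subseteq> common_roots r" "vsum M0 = vsub (vsub highB (eps a)) (eps b)"
    using assms by (auto simp: residual_partitions_def partitions_def)
  then have "set_mset (glue_A r x) \<subseteq> Lambda r"
    using common_roots_subset_Lambda vsub_eps_mem_Lambda by (auto simp: glue_A_def)
  moreover have "vsum (glue_A r x) = vsub (vsub highB (eps (r + 1))) (eps (r + 2))"
    using x by (simp add: glue_A_def fun_eq_iff)
  ultimately show ?thesis by (simp add: partitions_def)
qed

lemma inj_on_glue_A: "inj_on (glue_A r) (residual_partitions r)"
proof (rule inj_onI)
  fix x y assume "x \<in> residual_partitions r" "y \<in> residual_partitions r"
    and eq: "glue_A r x = glue_A r y"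
  then obtain M0 a b N0 c d
    where x: "x = (M0, a, b)" "set_mset M0 \<subseteq> common_roots r" "a \<in> {1..r}" "b \<in> {1..r}"
      and y: "y = (N0, c, d)" "set_mset N0 \<subseteq> common_roots r" "c \<in> {1..r}" "d \<in> {1..r}"
    by (auto simp: residual_partitions_def partitions_def)
  have vanish: "v (r + 1) = 0" "v (r + 2) = 0" if "v \<in># M0 + N0" for v
    using that x(2) y(2) common_roots_apply_beyond by auto
  have "{#vsub (eps a) (eps (r + 1))#} + add_mset (vsub (eps b) (eps (r + 2))) M0 =
        {#vsub (eps c) (eps (r + 1))#} + add_mset (vsub (eps d) (eps (r + 2))) N0"
    using eq x y by (simp add: glue_A_def add_mset_commute)
  then have "{#vsub (eps a) (eps (r + 1))#} = {#vsub (eps c) (eps (r + 1))#} \<and>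
      add_mset (vsub (eps b) (eps (r + 2))) M0 = add_mset (vsub (eps d) (eps (r + 2))) N0"
    by (rule union_eq_union_separated[where P = "\<lambda>v. v (r + 1) \<noteq> 0"])
      (use vanish x y in auto)
  moreover have "{#vsub (eps b) (eps (r + 2))#} = {#vsub (eps d) (eps (r + 2))#} \<and> M0 = N0"
    if "{#vsub (eps b) (eps (r + 2))#} + M0 = {#vsub (eps d) (eps (r + 2))#} + N0"
    by (rule union_eq_union_separated[OF that, where P = "\<lambda>v. v (r + 2) \<noteq> 0"])
      (use vanish x y in auto)
  ultimately have "vsub (eps a) (eps (r + 1)) c = vsub (eps c) (eps (r + 1)) c"
    and "vsub (eps b) (eps (r + 2)) d = vsub (eps d) (eps (r + 2)) d" "M0 = N0"
    by simp_all
  then show "x = y" using x y by (auto split: if_splits)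
qed

definition tail_weight :: "nat \<Rightarrow> (nat \<Rightarrow> real) \<Rightarrow> real" where
  "tail_weight r v = - (v (r + 1) + v (r + 2))"

lemma tail_weight_Lambda:
  assumes "v \<in> Lambda r"
  shows "(tail_weight r v = 0 \<longleftrightarrow> v \<in> common_roots r) \<and> tail_weight r v \<in> {0, 1}"
  using assms
proof (cases rule: LambdaE)
  case common
  then show ?thesis using common_roots_apply_beyond[of v r] by (simp add: tail_weight_def)
next
  case (to_penultimate a)
  then show ?thesis using common_roots_apply_beyond[of v r "r + 1"] by (auto simp: tail_weight_def)
next
  case (to_last a)
  then show ?thesis using common_roots_apply_beyond[of v r "r + 2"] by (auto simp: tail_weight_def)
qed

lemma Lambda_pair_eq_glue_A:
  assumes "x \<in> Lambda r" "x \<notin> common_roots r" "y \<in> Lambda r" "y \<notin> common_roots r"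
    and "x (r + 1) + y (r + 1) = -1"
  obtains a b where "a \<in> {1..r}" "b \<in> {1..r}" "add_mset x (add_mset y M0) = glue_A r (M0, a, b)"
proof -
  from assms(1) show thesis
  proof (cases rule: LambdaE)
    case (to_penultimate a)
    from assms(3) show thesis
      by (cases rule: LambdaE) (use assms to_penultimate that in \<open>auto simp: glue_A_def\<close>)
  next
    case (to_last b)
    from assms(3) show thesis
      by (cases rule: LambdaE) (use assms to_last that in \<open>auto simp: glue_A_def add_mset_commute\<close>)
  qed (use assms in simp)
qed

lemma partitions_Lambda_subset_glue_A:
  assumes "2 \<le> r"
  shows "partitions (Lambda r) (vsub (vsub highB (eps (r + 1))) (eps (r + 2)))
           \<subseteq> glue_A r ` residual_partitions r"
proof
  fix M assume "M \<in> partitions (Lambda r) (vsub (vsub highB (eps (r + 1))) (eps (r + 2)))"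
  then have roots: "set_mset M \<subseteq> Lambda r"
    and sum: "vsum M = vsub (vsub highB (eps (r + 1))) (eps (r + 2))"
    by (auto simp: partitions_def)
  have "(\<Sum>v\<in>#M. tail_weight r v) = tail_weight r (vsum M)"
    by (rule additive_vsum[symmetric]) (simp_all add: tail_weight_def)
  also have "\<dots> = 2" using sum assms by (simp add: tail_weight_def highB_def)
  finally have sum_weight: "(\<Sum>v\<in>#M. tail_weight r v) = 2" .
  have "\<forall>v\<in>#M. tail_weight r v \<in> {0, 1, 2}" using roots tail_weight_Lambda by auto
  from this sum_weight obtain x y M0 where M: "M = add_mset x (add_mset y M0)"
      "tail_weight r x = 1" "tail_weight r y = 1" and M0: "\<forall>v\<in>#M0. tail_weight r v = 0"
  proof (cases rule: sum_mset_eq_2_cases)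
    case (single x M0)
    then show thesis using roots tail_weight_Lambda[of x r] by auto
  qed
  have M0_common: "set_mset M0 \<subseteq> common_roots r" using M0 M(1) roots tail_weight_Lambda by auto
  have "vsum M (r + 1) = x (r + 1) + y (r + 1)"
    using M(1) vsum_common_roots_apply_beyond[OF M0_common] by simp
  then have "x (r + 1) + y (r + 1) = -1" using sum assms by (simp add: highB_def)
  then obtain a b where ab: "a \<in> {1..r}" "b \<in> {1..r}" and M_eq: "M = glue_A r (M0, a, b)"
    using Lambda_pair_eq_glue_A[of x r y M0] M roots
      tail_weight_Lambda[of x r] tail_weight_Lambda[of y r] by auto
  have "vsum M0 k = vsub (vsub highB (eps a)) (eps b) k" for k
    using fun_cong[OF sum, of k] M_eq by (simp add: glue_A_def)
  then have "(M0, a, b) \<in> residual_partitions r"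
    using ab M0_common by (simp add: residual_partitions_def partitions_def fun_eq_iff)
  then show "M \<in> glue_A r ` residual_partitions r" using M_eq by blast
qed

definition coord_sum :: "nat \<Rightarrow> (nat \<Rightarrow> real) \<Rightarrow> real" where
  "coord_sum r v = (\<Sum>k = 1..r. v k)"

lemma coord_sum_vadd [simp]: "coord_sum r (vadd u v) = coord_sum r u + coord_sum r v"
  by (simp add: coord_sum_def sum.distrib)

lemma coord_sum_vsub [simp]: "coord_sum r (vsub u v) = coord_sum r u - coord_sum r v"
  by (simp add: coord_sum_def sum_subtractf)

lemma coord_sum_eps [simp]: "coord_sum r (eps a) = (if a \<in> {1..r} then 1 else 0)"
  by (simp add: coord_sum_def)

lemma coord_sum_common_roots: "v \<in> common_roots r \<Longrightarrow> coord_sum r v = 0"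
  by (auto simp: common_roots_def)

lemma posBE:
  assumes "v \<in> posB r"
  obtains (common) "v \<in> common_roots r"
    | (long) a b where "1 \<le> a" "a < b" "b \<le> r" "v = vadd (eps a) (eps b)"
    | (short) a where "a \<in> {1..r}" "v = eps a"
  using assms unfolding posB_def common_roots_def by auto

lemma coord_sum_posB:
  assumes "v \<in> posB r"
  shows "(coord_sum r v = 0 \<longleftrightarrow> v \<in> common_roots r) \<and> coord_sum r v \<in> {0, 1, 2}"
  using assms by (cases rule: posBE) (auto dest: coord_sum_common_roots)

lemma common_roots_subset_posB: "common_roots r \<subseteq> posB r"
  by (auto simp: common_roots_def posB_def)

definition head_B :: "nat \<Rightarrow> nat \<Rightarrow> (nat \<Rightarrow> real) multiset" where
  "head_B a b = (if a < b then {#vadd (eps a) (eps b)#} else {#eps a, eps b#})"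

lemma vsum_head_B: "vsum (head_B a b) = vadd (eps a) (eps b)"
  by (simp add: head_B_def fun_eq_iff)

lemma head_B_eq_iff [simp]: "head_B a b = head_B c d \<longleftrightarrow> a = c \<and> b = d"
proof
  assume eq: "head_B a b = head_B c d"
  then have "a < b \<longleftrightarrow> c < d"
    using arg_cong[OF eq, of size] by (simp add: head_B_def split: if_splits)
  moreover have "(a = c \<and> b = d) \<or> (a = d \<and> b = c)"
    using arg_cong[OF eq, of vsum] by (simp add: vsum_head_B vadd_eps_eq_iff)
  ultimately show "a = c \<and> b = d" by auto
qed simp

definition glue_B :: "(nat \<Rightarrow> real) multiset \<times> nat \<times> nat \<Rightarrow> (nat \<Rightarrow> real) multiset" where
  "glue_B = (\<lambda>(M0, a, b). head_B a b + M0)"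

lemma glue_B_mem_partitions:
  assumes "x \<in> residual_partitions r"
  shows "glue_B x \<in> partitions (posB r) highB"
proof -
  obtain M0 a b where x: "x = (M0, a, b)" "a \<in> {1..r}" "b \<in> {1..r}"
      "set_mset M0 \<subseteq> common_roots r" "vsum M0 = vsub (vsub highB (eps a)) (eps b)"
    using assms by (auto simp: residual_partitions_def partitions_def)
  have "set_mset (head_B a b) \<subseteq> posB r"
    using x(2,3) by (auto simp: head_B_def posB_def)
  then have "set_mset (glue_B x) \<subseteq> posB r"
    using x common_roots_subset_posB by (auto simp: glue_B_def)
  moreover have "vsum (glue_B x) = highB"
    using x by (simp add: glue_B_def vsum_head_B fun_eq_iff)
  ultimately show ?thesis by (simp add: partitions_def)
qed

lemma inj_on_glue_B: "inj_on glue_B (residual_partitions r)"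
proof (rule inj_onI)
  fix x y assume "x \<in> residual_partitions r" "y \<in> residual_partitions r"
    and eq: "glue_B x = glue_B y"
  then obtain M0 a b N0 c d
    where x: "x = (M0, a, b)" "set_mset M0 \<subseteq> common_roots r" "a \<in> {1..r}" "b \<in> {1..r}"
      and y: "y = (N0, c, d)" "set_mset N0 \<subseteq> common_roots r" "c \<in> {1..r}" "d \<in> {1..r}"
    by (auto simp: residual_partitions_def partitions_def)
  have "head_B a b = head_B c d \<and> M0 = N0"
  proof (rule union_eq_union_separated[where P = "\<lambda>v. coord_sum r v \<noteq> 0"])
    show "head_B a b + M0 = head_B c d + N0" using eq x y by (simp add: glue_B_def)
  qed (use x y coord_sum_common_roots in \<open>auto simp: head_B_def\<close>)
  then show "x = y" using x y by simp
qed

lemma partitions_posB_subset_glue_B: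
  assumes "2 \<le> r"
  shows "partitions (posB r) highB \<subseteq> glue_B ` residual_partitions r"
proof
  fix M assume "M \<in> partitions (posB r) highB"
  then have roots: "set_mset M \<subseteq> posB r" and sum: "vsum M = highB"
    by (auto simp: partitions_def)
  have "(\<Sum>v\<in>#M. coord_sum r v) = coord_sum r (vsum M)"
    by (rule additive_vsum[symmetric]) (auto simp: coord_sum_def sum.distrib)
  also have "\<dots> = 2" using sum assms by (simp add: highB_def)
  finally have sum_cs: "(\<Sum>v\<in>#M. coord_sum r v) = 2" .
  have "\<forall>v\<in>#M. coord_sum r v \<in> {0, 1, 2}" using roots coord_sum_posB by blast
  from this sum_cs obtain a b M0 where ab: "a \<in> {1..r}" "b \<in> {1..r}"
      and M_eq: "M = glue_B (M0, a, b)" and M0_common: "set_mset M0 \<subseteq> common_roots r"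
  proof (cases rule: sum_mset_eq_2_cases)
    case (single x M0)
    have M0: "set_mset M0 \<subseteq> common_roots r" using single roots coord_sum_posB by auto
    from single(1) roots have "x \<in> posB r" by simp
    then show thesis
    proof (cases rule: posBE)
      case (long a b)
      then show thesis using that[of a b M0] single M0 by (simp add: glue_B_def head_B_def)
    qed (use single in \<open>auto dest: coord_sum_common_roots\<close>)
  next
    case (pair x y M0)
    have M0: "set_mset M0 \<subseteq> common_roots r" using pair roots coord_sum_posB by auto
    from pair(1) roots have "x \<in> posB r" "y \<in> posB r" by simp_all
    then obtain a b where "a \<in> {1..r}" "b \<in> {1..r}" "x = eps a" "y = eps b"
      using pair by (elim posBE) (auto dest: coord_sum_common_roots)
    then show thesis
      using that[of a b M0] that[of b a M0] pair M0
      by (cases "b \<le> a") (auto simp: glue_B_def head_B_def add_mset_commute)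
  qed
  have "vsum M0 k = vsub (vsub highB (eps a)) (eps b) k" for k
    using fun_cong[OF sum, of k] M_eq by (simp add: glue_B_def vsum_head_B)
  then have "(M0, a, b) \<in> residual_partitions r"
    using ab M0_common by (simp add: residual_partitions_def partitions_def fun_eq_iff)
  then show "M \<in> glue_B ` residual_partitions r" using M_eq by blast
qed

lemma bij_betw_glue_A:
  assumes "2 \<le> r"
  shows "bij_betw (glue_A r) (residual_partitions r)
           (partitions (Lambda r) (vsub (vsub highB (eps (r + 1))) (eps (r + 2))))"
  unfolding bij_betw_def
  using inj_on_glue_A glue_A_mem_partitions partitions_Lambda_subset_glue_A[OF assms] by blast

lemma bij_betw_glue_B:
  assumes "2 \<le> r"
  shows "bij_betw glue_B (residual_partitions r) (partitions (posB r) highB)"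
  unfolding bij_betw_def
  using inj_on_glue_B glue_B_mem_partitions partitions_posB_subset_glue_B[OF assms] by blast

lemma twice_highA_minus_ends:
  "vsub (vsub (vscale 2 (highA r)) (alpha 1)) (alpha (r + 1)) =
   vsub (vsub highB (eps (r + 1))) (eps (r + 2))"
  by (simp add: fun_eq_iff highA_def alpha_def highB_def)

theorem mainTheorem13:
  fixes r :: nat
  assumes "r \<ge> 2"
  shows "KB r highB =
         K (posA r - {alpha (r + 1)})
           (vsub (vsub (vscale 2 (highA r)) (alpha 1)) (alpha (r + 1)))"
proof -
  have "KB r highB = card (residual_partitions r)"
    using bij_betw_same_card[OF bij_betw_glue_B[OF assms]]
    by (simp add: KB_def K_eq_card_partitions)
  also have "\<dots> = K (Lambda r) (vsub (vsub highB (eps (r + 1))) (eps (r + 2)))"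
    using bij_betw_same_card[OF bij_betw_glue_A[OF assms]] by (simp add: K_eq_card_partitions)
  finally show ?thesis by (simp only: twice_highA_minus_ends)
qed

end
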